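(* Let $S$ be a financial system with payment priorities, $v$ a bank, $x\ge 0$, and $Q\ge 0$ a number such that every solution $r$ of $S$ satisfies $q_v(r)\le Q$. Let $S'$ be the system obtained from $S$ by replacing $e_v$ with $e_v+x$ (everything else unchanged). Then every solution $r'$ of $S'$ satisfies $q'_v(r')\le Q+x$, where $q'_v$ is the payoff of $v$ in $S'$. More precisely, if $r'$ is a solution of $S'$ with $q'_v(r')>x$, then $r'$ is also a solution of $S$ and $q_v(r')=q'_v(r')-x$.
   Context: A financial system with payment priorities consists of: a finite set $V$ of banks; external assets $e_v\ge 0$ for each $v\in V$; a number $P\ge 1$ of priority levels; and a finite set of contracts, each of which is either a debt contract from a debtor $u$ to a creditor $v\neq u$ with weight $c>0$, or a credit default swap (CDS) from a debtor $u$ to a creditor $v\neq u$ in reference to a bank $w\notin\{u,v\}$ (the reference entity) with weight $c>0$. Every contract has a priority in $\{1,\dots,P\}$ (1 is the highest priority). It is assumed that every bank that is the reference entity of some CDS is the debtor of at least one debt contract of positive weight. Given a recovery rate vector $r\in[0,1]^V$: the liability of a contract $k$ is $l_k(r)=c$ if $k$ is a debt of weight $c$, and $l_k(r)=c\,(1-r_w)$ if $k$ is a CDS of weight $c$ in reference to $w$. For a bank $v$, $l_v(r)$ is the sum of the liabilities of the contracts with debtor $v$; $l_v^{(\rho)}(r)$ is the sum of the liabilities of contracts with debtor $v$ and priority $\rho$; and $l_v^{(\le\rho)}(r)=\sum_{i=1}^{\rho}l_v^{(i)}(r)$ (with $l_v^{(\le 0)}=0$). The payment on a contract $k$ with debtor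 $v$ and priority $\rho$ is $p_k(r)=l_k(r)\cdot\min\{1,\max\{0,(r_v l_v(r)-l_v^{(\le\rho-1)}(r))/l_v^{(\rho)}(r)\}\}$ (and $p_k(r)=0$ if $l_v^{(\rho)}(r)=0$). The assets of $v$ are $a_v(r)=e_v+\sum_k p_k(r)$, summing over contracts $k$ with creditor $v$. A vector $r\in[0,1]^V$ is a solution (clearing vector) if for every $v\in V$: $r_v=1$ when $a_v(r)\ge l_v(r)$, and $r_v=a_v(r)/l_v(r)$ when $a_v(r)<l_v(r)$. The payoff of $v$ is $q_v(r)=\max\{a_v(r)-l_v(r),0\}$. When $P=1$, payments reduce to $p_k(r)=r_v\,l_k(r)$ (principle of proportionality); this is called the base model. *)

theory Defs
  imports Complex_Main
begin

text \<open>Contract kinds: a debt contract, or a CDS in reference to a given bank.\<close>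
datatype 'b ckind = Debt | CDS 'b

text \<open>Contracts are indexed by a
  finite set of indices (so that identical contracts may occur several times);
  each index carries its kind, debtor, creditor, weight and priority.\<close>
record ('b, 'c) fsystem =
  banks :: "'b set"
  ext :: "'b \<Rightarrow> real"
  nprio :: nat
  contracts :: "'c set"
  kind :: "'c \<Rightarrow> 'b ckind"
  debtor :: "'c \<Rightarrow> 'b"
  creditor :: "'c \<Rightarrow> 'b"
  weight :: "'c \<Rightarrow> real"
  prio :: "'c \<Rightarrow> nat"

definition wf_system :: "('b, 'c) fsystem \<Rightarrow> bool" where
  "wf_system S \<longleftrightarrow>
     finite (banks S) \<and> (\<forall>v\<in>banks S. ext S v \<ge> 0) \<and> nprio S \<ge> 1 \<and>
     finite (contracts S) \<and>
     (\<forall>k\<in>contracts S.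
        debtor S k \<in> banks S \<and> creditor S k \<in> banks S \<and>
        debtor S k \<noteq> creditor S k \<and> weight S k > 0 \<and>
        prio S k \<in> {1..nprio S} \<and>
        (\<forall>w. kind S k = CDS w \<longrightarrow>
             w \<in> banks S \<and> w \<noteq> debtor S k \<and> w \<noteq> creditor S k \<and>
             (\<exists>k'\<in>contracts S. kind S k' = Debt \<and> debtor S k' = w \<and> weight S k' > 0)))"

definition liab_c :: "('b, 'c) fsystem \<Rightarrow> ('b \<Rightarrow> real) \<Rightarrow> 'c \<Rightarrow> real" where
  "liab_c S r k = (case kind S k of Debt \<Rightarrow> weight S k | CDS w \<Rightarrow> weight S k * (1 - r w))"

definition liab :: "('b, 'c) fsystem \<Rightarrow> ('b \<Rightarrow> real) \<Rightarrow> 'b \<Rightarrow> real" where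
  "liab S r v = (\<Sum>k\<in>{k\<in>contracts S. debtor S k = v}. liab_c S r k)"

definition liab_prio :: "('b, 'c) fsystem \<Rightarrow> ('b \<Rightarrow> real) \<Rightarrow> 'b \<Rightarrow> nat \<Rightarrow> real" where
  "liab_prio S r v \<rho> = (\<Sum>k\<in>{k\<in>contracts S. debtor S k = v \<and> prio S k = \<rho>}. liab_c S r k)"

definition liab_upto :: "('b, 'c) fsystem \<Rightarrow> ('b \<Rightarrow> real) \<Rightarrow> 'b \<Rightarrow> nat \<Rightarrow> real" where
  "liab_upto S r v \<rho> = (\<Sum>i=1..\<rho>. liab_prio S r v i)"

definition payment :: "('b, 'c) fsystem \<Rightarrow> ('b \<Rightarrow> real) \<Rightarrow> 'c \<Rightarrow> real" where
  "payment S r k =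
     (let v = debtor S k; \<rho> = prio S k in
      if liab_prio S r v \<rho> = 0 then 0
      else liab_c S r k *
           min 1 (max 0 ((r v * liab S r v - liab_upto S r v (\<rho> - 1)) / liab_prio S r v \<rho>)))"

definition assets :: "('b, 'c) fsystem \<Rightarrow> ('b \<Rightarrow> real) \<Rightarrow> 'b \<Rightarrow> real" where
  "assets S r v = ext S v + (\<Sum>k\<in>{k\<in>contracts S. creditor S k = v}. payment S r k)"

text \<open>Clearing vectors: \<open>r \<in> [0,1]^V\<close> (values outside \<open>V\<close> are irrelevant).\<close>
definition is_solution :: "('b, 'c) fsystem \<Rightarrow> ('b \<Rightarrow> real) \<Rightarrow> bool" where
  "is_solution S r \<longleftrightarrow>
     (\<forall>v\<in>banks S. 0 \<le> r v \<and> r v \<le> 1 \<and>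
        (assets S r v \<ge> liab S r v \<longrightarrow> r v = 1) \<and>
        (assets S r v < liab S r v \<longrightarrow> r v = assets S r v / liab S r v))"

definition payoff :: "('b, 'c) fsystem \<Rightarrow> ('b \<Rightarrow> real) \<Rightarrow> 'b \<Rightarrow> real" where
  "payoff S r v = max (assets S r v - liab S r v) 0"

end

theory Submission
  imports Defs
begin

text \<open>Raising \<open>e_v\<close> by \<open>x\<close> leaves every liability and every payment unchanged for a fixed
  recovery vector \<open>r\<close>; it only adds \<open>x\<close> to the assets of \<open>v\<close>. If the payoff of \<open>v\<close> in the
  raised system exceeds \<open>x\<close>, then \<open>v\<close> is solvent at \<open>r\<close> even without the extra \<open>x\<close>, so the
  clearing conditions of both systems coincide at \<open>r\<close>: \<open>r\<close> solves the original system and the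
  payoff of \<open>v\<close> drops by exactly \<open>x\<close>, hence is bounded by \<open>Q\<close>.\<close>

definition raise_ext :: "('b, 'c) fsystem \<Rightarrow> 'b \<Rightarrow> real \<Rightarrow> ('b, 'c) fsystem" where
  "raise_ext S v x = S\<lparr>ext := (ext S)(v := ext S v + x)\<rparr>"

lemma liab_c_ext_update [simp]: "liab_c (S\<lparr>ext := e\<rparr>) = liab_c (S :: ('b, 'c) fsystem)"
  by (intro HOL.ext) (simp add: liab_c_def split: ckind.split)

lemma liab_ext_update [simp]: "liab (S\<lparr>ext := e\<rparr>) = liab (S :: ('b, 'c) fsystem)"
  by (intro HOL.ext) (simp add: liab_def)

lemma liab_prio_ext_update [simp]: "liab_prio (S\<lparr>ext := e\<rparr>) = liab_prio (S :: ('b, 'c) fsystem)"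
  by (intro HOL.ext) (simp add: liab_prio_def)

lemma liab_upto_ext_update [simp]: "liab_upto (S\<lparr>ext := e\<rparr>) = liab_upto (S :: ('b, 'c) fsystem)"
  by (intro HOL.ext) (simp add: liab_upto_def)

lemma payment_ext_update [simp]: "payment (S\<lparr>ext := e\<rparr>) = payment (S :: ('b, 'c) fsystem)"
  by (intro HOL.ext) (simp add: payment_def Let_def)

lemma banks_raise_ext [simp]: "banks (raise_ext S v x) = banks S"
  by (simp add: raise_ext_def)

lemma liab_raise_ext [simp]: "liab (raise_ext S v x) = liab S"
  by (simp add: raise_ext_def)

lemma assets_raise_ext:
  "assets (raise_ext S v x) r u = assets S r u + (if u = v then x else 0)"
  by (simp add: raise_ext_def assets_def)

lemma payoff_raise_ext:
  "payoff (raise_ext S v x) r v = max (assets S r v + x - liab S r v) 0"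
  by (simp add: payoff_def assets_raise_ext)

lemma is_solution_raise_ext_iff:
  assumes "x \<ge> 0" and solvent: "liab S r v \<le> assets S r v"
  shows "is_solution (raise_ext S v x) r \<longleftrightarrow> is_solution S r"
proof -
  have "(liab S r u \<le> assets (raise_ext S v x) r u \<longleftrightarrow> liab S r u \<le> assets S r u)
      \<and> (assets (raise_ext S v x) r u < liab S r u \<longleftrightarrow> assets S r u < liab S r u)
      \<and> (assets (raise_ext S v x) r u < liab S r u \<longrightarrow>
           assets (raise_ext S v x) r u = assets S r u)" for u
    using assms by (cases "u = v") (auto simp: assets_raise_ext)
  then show ?thesis
    unfolding is_solution_def by (metis banks_raise_ext liab_raise_ext)
qed

theorem mainTheorem5:
  fixes S :: "('b, 'c) fsystem" and v :: 'b and x Q :: real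
  assumes "wf_system S" and "v \<in> banks S" and "x \<ge> 0" and "Q \<ge> 0"
    and "\<forall>r. is_solution S r \<longrightarrow> payoff S r v \<le> Q"
  shows "(\<forall>r'. is_solution (S\<lparr>ext := (ext S)(v := ext S v + x)\<rparr>) r' \<longrightarrow>
            payoff (S\<lparr>ext := (ext S)(v := ext S v + x)\<rparr>) r' v \<le> Q + x)
       \<and> (\<forall>r'. is_solution (S\<lparr>ext := (ext S)(v := ext S v + x)\<rparr>) r' \<and>
            payoff (S\<lparr>ext := (ext S)(v := ext S v + x)\<rparr>) r' v > x \<longrightarrow>
            is_solution S r' \<and>
            payoff S r' v = payoff (S\<lparr>ext := (ext S)(v := ext S v + x)\<rparr>) r' v - x)"
proof -
  have shift: "is_solution S r \<and> payoff S r v = payoff (raise_ext S v x) r v - x"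
    if sol: "is_solution (raise_ext S v x) r" and gt: "payoff (raise_ext S v x) r v > x" for r
  proof -
    have solvent: "liab S r v < assets S r v"
      using gt \<open>x \<ge> 0\<close> by (simp add: payoff_raise_ext)
    then have "is_solution S r"
      using sol is_solution_raise_ext_iff[OF \<open>x \<ge> 0\<close>, of S r v] by simp
    moreover have "payoff S r v = payoff (raise_ext S v x) r v - x"
      unfolding payoff_raise_ext using solvent \<open>x \<ge> 0\<close> by (simp add: payoff_def)
    ultimately show ?thesis ..
  qed
  have "payoff (raise_ext S v x) r v \<le> Q + x" if "is_solution (raise_ext S v x) r" for r
    using shift[OF that] assms(4,5) by (cases "payoff (raise_ext S v x) r v > x") force+
  with shift show ?thesis
    unfolding raise_ext_def by blast
qed

end
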